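(* For a weakly symmetric discrete memoryless channel $W$ with input alphabet $\mathbb{F}_q$, $$C_{KV}(W)\ge1-(q-1)Z(W),$$ where $Z(W)$ is the Bhattacharyya parameter of $W$.
   Context: A discrete memoryless channel with transition probabilities $W(y|x)$, $x\in\mathbb{F}_q$, $y\in\mathcal{Y}$, is weakly symmetric if $\mathcal{Y}$ admits a partition $Y_1\cup\dots\cup Y_r$ such that each submatrix $(W(y|x))_{x,y\in Y_i}$ has all rows permutations of each other and all columns permutations of each other. With input $X$ uniform on $\mathbb{F}_q$ and output $Y$, the APP vector of output $y$ is $\pi_y=(\mathrm{prob}(X=\alpha|Y=y))_\alpha$ and the Koetter–Vardy capacity is $C_{KV}(W)=\mathbb{E}(\sum_\alpha\pi_Y(\alpha)^2)$. The Bhattacharyya parameter is $Z(W)=\frac1{q(q-1)}\sum_{x\ne x'}\sum_{y\in\mathcal{Y}}\sqrt{W(y|x)W(y|x')}$. *)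

theory Defs
  imports Complex_Main "HOL-Library.Disjoint_Sets" "HOL-Combinatorics.Permutations"
begin

text \<open>A discrete memoryless channel with input alphabet the finite field 'a and
finite output alphabet 'b; W x y stands for the transition probability W(y|x).\<close>

definition dmc :: "('a::finite \<Rightarrow> 'b::finite \<Rightarrow> real) \<Rightarrow> bool" where
  "dmc W \<longleftrightarrow> (\<forall>x y. 0 \<le> W x y) \<and> (\<forall>x. (\<Sum>y\<in>UNIV. W x y) = 1)"

definition weakly_symmetric :: "('a::finite \<Rightarrow> 'b::finite \<Rightarrow> real) \<Rightarrow> bool" where
  "weakly_symmetric W \<longleftrightarrow> (\<exists>P. partition_on (UNIV :: 'b set) P \<and>
     (\<forall>B\<in>P.
        (\<forall>x x'. \<exists>\<sigma>. \<sigma> permutes B \<and> (\<forall>y\<in>B. W x' (\<sigma> y) = W x y)) \<and>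
        (\<forall>y\<in>B. \<forall>y'\<in>B. \<exists>\<tau>. \<tau> permutes (UNIV :: 'a set) \<and> (\<forall>x. W (\<tau> x) y' = W x y))))"

text \<open>Output distribution for uniform input X.\<close>
definition out_prob :: "('a::finite \<Rightarrow> 'b \<Rightarrow> real) \<Rightarrow> 'b \<Rightarrow> real" where
  "out_prob W y = (\<Sum>x\<in>UNIV. W x y) / real (card (UNIV :: 'a set))"

text \<open>APP vector: prob(X = alpha | Y = y) for uniform input.\<close>
definition app :: "('a::finite \<Rightarrow> 'b \<Rightarrow> real) \<Rightarrow> 'b \<Rightarrow> 'a \<Rightarrow> real" where
  "app W y \<alpha> = W \<alpha> y / (\<Sum>x\<in>UNIV. W x y)"

text \<open>Koetter--Vardy capacity E(sum_alpha pi_Y(alpha)^2); outputs of probability zero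
contribute nothing.\<close>
definition C_KV :: "('a::finite \<Rightarrow> 'b::finite \<Rightarrow> real) \<Rightarrow> real" where
  "C_KV W = (\<Sum>y\<in>UNIV. out_prob W y * (\<Sum>\<alpha>\<in>UNIV. (app W y \<alpha>)^2))"

definition bhattacharyya :: "('a::finite \<Rightarrow> 'b::finite \<Rightarrow> real) \<Rightarrow> real" where
  "bhattacharyya W = (1 / (real (card (UNIV :: 'a set)) * (real (card (UNIV :: 'a set)) - 1))) *
     (\<Sum>x\<in>UNIV. \<Sum>x'\<in>UNIV - {x}. \<Sum>y\<in>UNIV. sqrt (W x y * W x' y))"

end

theory Submission
  imports Defs
begin

text \<open>Fix an output y and write w x = W(y|x), S = sum_x w x. Then
  S^2 - sum_x w x^2 = sum_{x \<noteq> x'} w x w x' \<le> S sum_{x \<noteq> x'} sqrt (w x w x'), because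
  w x w x' \<le> sqrt (w x w x') S. Dividing by S and averaging over y with weight 1/q turns the left
  side into 1 - C_KV(W) and the right side into (q - 1) Z(W).\<close>

lemma square_sum_eq_sum_squares_plus_off_diagonal:
  fixes w :: "'a \<Rightarrow> 'c::comm_semiring_1"
  assumes "finite A"
  shows "(\<Sum>x\<in>A. w x)\<^sup>2 = (\<Sum>x\<in>A. (w x)\<^sup>2) + (\<Sum>x\<in>A. \<Sum>x'\<in>A - {x}. w x * w x')"
proof -
  have "(\<Sum>x\<in>A. w x)\<^sup>2 = (\<Sum>x\<in>A. \<Sum>x'\<in>A. w x * w x')"
    by (simp add: power2_eq_square sum_product)
  also have "\<dots> = (\<Sum>x\<in>A. (w x)\<^sup>2 + (\<Sum>x'\<in>A - {x}. w x * w x'))"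
    using assms by (intro sum.cong refl) (simp add: sum.remove power2_eq_square)
  finally show ?thesis by (simp add: sum.distrib)
qed

lemma sum_minus_sum_squares_div_sum_le_off_diagonal_sqrt:
  fixes w :: "'a \<Rightarrow> real"
  assumes "finite A" and nonneg: "\<And>x. x \<in> A \<Longrightarrow> 0 \<le> w x"
  shows "(\<Sum>x\<in>A. w x) - (\<Sum>x\<in>A. (w x)\<^sup>2 / (\<Sum>x\<in>A. w x))
         \<le> (\<Sum>x\<in>A. \<Sum>x'\<in>A - {x}. sqrt (w x * w x'))"
proof -
  define S where "S = (\<Sum>x\<in>A. w x)"
  have le_S: "w x \<le> S" if "x \<in> A" for x
    unfolding S_def using assms that by (intro member_le_sum) auto
  have rhs_nonneg: "0 \<le> (\<Sum>x\<in>A. \<Sum>x'\<in>A - {x}. sqrt (w x * w x'))"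
    using nonneg by (intro sum_nonneg) auto
  show ?thesis
  proof (cases "S = 0")
    case True
    then show ?thesis using rhs_nonneg by (simp flip: S_def)
  next
    case False
    then have S_pos: "S > 0"
      using nonneg by (simp add: S_def order_less_le sum_nonneg)
    have product_le: "w x * w x' / S \<le> sqrt (w x * w x')" if "x \<in> A" "x' \<in> A" for x x'
    proof -
      have "w x * w x' \<le> S\<^sup>2"
        using le_S nonneg that S_pos unfolding power2_eq_square by (intro mult_mono) auto
      then have "sqrt (w x * w x') \<le> S"
        using S_pos real_le_lsqrt by simp
      have product_nonneg: "0 \<le> w x * w x'"
        using nonneg that by (intro mult_nonneg_nonneg) auto
      then have "w x * w x' = sqrt (w x * w x') * sqrt (w x * w x')"
        by simp
      also have "\<dots> \<le> S * sqrt (w x * w x')"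
        using \<open>sqrt (w x * w x') \<le> S\<close> by (rule mult_right_mono) (simp add: product_nonneg)
      finally have "w x * w x' \<le> S * sqrt (w x * w x')" .
      then show ?thesis
        using S_pos by (simp add: divide_le_eq mult.commute)
    qed
    have "S - (\<Sum>x\<in>A. (w x)\<^sup>2 / S) = (S\<^sup>2 - (\<Sum>x\<in>A. (w x)\<^sup>2)) / S"
      using S_pos by (simp add: sum_divide_distrib[symmetric] field_simps power2_eq_square)
    also have "\<dots> = (\<Sum>x\<in>A. \<Sum>x'\<in>A - {x}. w x * w x' / S)"
      unfolding S_def square_sum_eq_sum_squares_plus_off_diagonal[OF \<open>finite A\<close>]
      by (simp add: sum_divide_distrib)
    also have "\<dots> \<le> (\<Sum>x\<in>A. \<Sum>x'\<in>A - {x}. sqrt (w x * w x'))"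
      using product_le by (intro sum_mono) auto
    finally show ?thesis by (simp add: S_def)
  qed
qed

lemma C_KV_eq:
  fixes W :: "'a::finite \<Rightarrow> 'b::finite \<Rightarrow> real"
  shows "C_KV W = (\<Sum>y\<in>UNIV. \<Sum>a\<in>UNIV. (W a y)\<^sup>2 / (\<Sum>x\<in>UNIV. W x y)) / real (card (UNIV :: 'a set))"
proof -
  have "S / q * (w / S)\<^sup>2 = w\<^sup>2 / S / q" for S q w :: real
    by (cases "S = 0") (simp_all add: power2_eq_square)
  then have "out_prob W y * (\<Sum>a\<in>UNIV. (app W y a)\<^sup>2)
      = (\<Sum>a\<in>UNIV. (W a y)\<^sup>2 / (\<Sum>x\<in>UNIV. W x y) / real (card (UNIV :: 'a set)))" for y
    unfolding out_prob_def app_def by (simp only: sum_distrib_left)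
  then show ?thesis
    unfolding C_KV_def by (simp add: sum_divide_distrib)
qed

lemma dmc_sum_outputs:
  fixes W :: "'a::finite \<Rightarrow> 'b::finite \<Rightarrow> real"
  assumes "dmc W"
  shows "(\<Sum>y\<in>UNIV. \<Sum>x\<in>UNIV. W x y) = real (card (UNIV :: 'a set))"
  using assms unfolding dmc_def by (subst sum.swap) simp

lemma bhattacharyya_scaled_eq:
  fixes W :: "'a::finite \<Rightarrow> 'b::finite \<Rightarrow> real"
  assumes "card (UNIV :: 'a set) \<ge> 2"
  shows "(real (card (UNIV :: 'a set)) - 1) * bhattacharyya W
    = (\<Sum>y\<in>UNIV. \<Sum>x\<in>UNIV. \<Sum>x'\<in>UNIV - {x}. sqrt (W x y * W x' y)) / real (card (UNIV :: 'a set))"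
proof -
  have "(\<Sum>x\<in>UNIV. \<Sum>x'\<in>UNIV - {x}. \<Sum>y\<in>UNIV. sqrt (W x y * W x' y))
      = (\<Sum>y\<in>UNIV. \<Sum>x\<in>UNIV. \<Sum>x'\<in>UNIV - {x}. sqrt (W x y * W x' y))"
    by (simp add: sum.swap[of _ "UNIV - {_}"] sum.swap[of _ UNIV UNIV])
  then show ?thesis
    using assms unfolding bhattacharyya_def by simp
qed

lemma card_field_ge_2: "card (UNIV :: 'a::{field,finite} set) \<ge> 2"
proof -
  have "card {0::'a, 1} \<le> card (UNIV :: 'a set)"
    by (rule card_mono) auto
  then show ?thesis by simp
qed

theorem proposition4:
  fixes W :: "'a::{field,finite} \<Rightarrow> 'b::finite \<Rightarrow> real"
  assumes "dmc W" and "weakly_symmetric W"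
  shows "C_KV W \<ge> 1 - (real (card (UNIV :: 'a set)) - 1) * bhattacharyya W"
proof -
  have nonneg: "\<And>x y. 0 \<le> W x y"
    using \<open>dmc W\<close> by (simp add: dmc_def)
  have "(\<Sum>x\<in>UNIV. W x y) - (\<Sum>a\<in>UNIV. (W a y)\<^sup>2 / (\<Sum>x\<in>UNIV. W x y))
      \<le> (\<Sum>x\<in>UNIV. \<Sum>x'\<in>UNIV - {x}. sqrt (W x y * W x' y))" for y
    by (rule sum_minus_sum_squares_div_sum_le_off_diagonal_sqrt) (simp_all add: nonneg)
  then have "(\<Sum>y\<in>UNIV. \<Sum>x\<in>UNIV. W x y) - (\<Sum>y\<in>UNIV. \<Sum>a\<in>UNIV. (W a y)\<^sup>2 / (\<Sum>x\<in>UNIV. W x y))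
      \<le> (\<Sum>y\<in>UNIV. \<Sum>x\<in>UNIV. \<Sum>x'\<in>UNIV - {x}. sqrt (W x y * W x' y))"
    by (simp only: sum_subtractf[symmetric] sum_mono)
  then have "(real (card (UNIV :: 'a set)) - (\<Sum>y\<in>UNIV. \<Sum>a\<in>UNIV. (W a y)\<^sup>2 / (\<Sum>x\<in>UNIV. W x y)))
        / real (card (UNIV :: 'a set))
      \<le> (\<Sum>y\<in>UNIV. \<Sum>x\<in>UNIV. \<Sum>x'\<in>UNIV - {x}. sqrt (W x y * W x' y)) / real (card (UNIV :: 'a set))"
    unfolding dmc_sum_outputs[OF \<open>dmc W\<close>] by (rule divide_right_mono) simp
  then have "1 - C_KV W \<le> (real (card (UNIV :: 'a set)) - 1) * bhattacharyya W"
    unfolding C_KV_eq bhattacharyya_scaled_eq[OF card_field_ge_2] diff_divide_distrib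
    by simp
  then show ?thesis by simp
qed

end
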